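(* Fix $e\in -\mathrm{int}(C)$ and let $A\in\mathcal P^0_{\mp C}(Y)$ be $\mp C$-compact. Then: (i) the map $D\mapsto w_e(D,A)$ is strictly $s$-decreasing on the family of $\mp C$-compact sets in $\mathcal P^0_{\mp C}(Y)$; (ii) the map $D\mapsto w_e(A,D)$ is strictly $s$-increasing on the family of $\mp C$-compact sets in $\mathcal P^0_{\mp C}(Y)$.
   Context: $Y$ is a real topological linear space and $C\subset Y$ is a convex, closed, pointed cone with nonempty interior $\mathrm{int}(C)$. $\mathbb R^2$ is ordered by $\mathbb R^2_+$: $a<_{\mathbb R^2_+}b$ iff $b-a\in\mathrm{int}(\mathbb R^2_+)$. $\mathcal P^0_{\mp C}(Y)$ is the family of nonempty $A\subset Y$ with $A+C\neq Y$ and $A-C\neq Y$. $A$ is $C$-compact if every cover of $A$ by sets of the form $U_\alpha+C$ with $U_\alpha$ open admits a finite subcover; $A$ is $\mp C$-compact if it is $C$-compact and $-C$-compact. Strict set relations: $A\prec^\ell B$ iff $B\subset A+\mathrm{int}(C)$; $A\prec^u B$ iff $A\subset B-\mathrm{int}(C)$; $A\prec^s B$ iff $A\prec^\ell B$ and $A\prec^u B$. For $e\in-\mathrm{int}(C)$: $\phi_{e,A}(y)=\inf\{t\in\mathbb R: y\in te+A+C\}$; $G^\ell_e(A,B)=\sup_{b\in B}\phi_{e,A}(b)$; $G^u_e(B,A):=-G^\ell_e(-B,-A)$; $w_e(A,B)=\big(-G^\ell_e(A,B),\,G^u_e(B,A)\big)$. A map $T$ is strictly $s$-increasing (resp. strictly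 $s$-decreasing) on a family $\mathcal A$ if $A,B\in\mathcal A$ and $A\prec^s B$ imply $T(A)<_{\mathbb R^2_+}T(B)$ (resp. $T(B)<_{\mathbb R^2_+}T(A)$). *)

theory Defs
  imports "HOL-Analysis.Analysis"
begin

definition msum :: "'a::real_vector set \<Rightarrow> 'a set \<Rightarrow> 'a set" (infixl "\<oplus>\<^sub>s" 65) where
  "A \<oplus>\<^sub>s B = {a + b | a b. a \<in> A \<and> b \<in> B}"

definition mdiff :: "'a::real_vector set \<Rightarrow> 'a set \<Rightarrow> 'a set" (infixl "\<ominus>\<^sub>s" 65) where
  "A \<ominus>\<^sub>s B = {a - b | a b. a \<in> A \<and> b \<in> B}"

definition topological_linear_space :: "'a::{real_vector,topological_space} itself \<Rightarrow> bool" where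
  "topological_linear_space TYPE('a) \<longleftrightarrow>
     continuous_on UNIV (\<lambda>p::'a \<times> 'a. fst p + snd p) \<and>
     continuous_on UNIV (\<lambda>p::real \<times> 'a. fst p *\<^sub>R snd p)"

definition is_cone :: "'a::real_vector set \<Rightarrow> bool" where
  "is_cone C \<longleftrightarrow> (\<forall>x\<in>C. \<forall>t::real. t \<ge> 0 \<longrightarrow> t *\<^sub>R x \<in> C)"

definition pointed :: "'a::real_vector set \<Rightarrow> bool" where
  "pointed C \<longleftrightarrow> C \<inter> uminus ` C = {0}"

definition P0 :: "'a::real_vector set \<Rightarrow> 'a set \<Rightarrow> bool" where
  "P0 C A \<longleftrightarrow> A \<noteq> {} \<and> A \<oplus>\<^sub>s C \<noteq> UNIV \<and> A \<ominus>\<^sub>s C \<noteq> UNIV"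

definition K_compact :: "'a::{real_vector,topological_space} set \<Rightarrow> 'a set \<Rightarrow> bool" where
  "K_compact K A \<longleftrightarrow>
     (\<forall>\<U>. (\<forall>U\<in>\<U>. open U) \<and> A \<subseteq> (\<Union>U\<in>\<U>. U \<oplus>\<^sub>s K) \<longrightarrow>
        (\<exists>\<F>\<subseteq>\<U>. finite \<F> \<and> A \<subseteq> (\<Union>U\<in>\<F>. U \<oplus>\<^sub>s K)))"

definition pm_compact :: "'a::{real_vector,topological_space} set \<Rightarrow> 'a set \<Rightarrow> bool" where
  "pm_compact C A \<longleftrightarrow> K_compact C A \<and> K_compact (uminus ` C) A"

definition lt_l :: "'a::{real_vector,topological_space} set \<Rightarrow> 'a set \<Rightarrow> 'a set \<Rightarrow> bool" where
  "lt_l C A B \<longleftrightarrow> B \<subseteq> A \<oplus>\<^sub>s interior C"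

definition lt_u :: "'a::{real_vector,topological_space} set \<Rightarrow> 'a set \<Rightarrow> 'a set \<Rightarrow> bool" where
  "lt_u C A B \<longleftrightarrow> A \<subseteq> B \<ominus>\<^sub>s interior C"

definition lt_s :: "'a::{real_vector,topological_space} set \<Rightarrow> 'a set \<Rightarrow> 'a set \<Rightarrow> bool" where
  "lt_s C A B \<longleftrightarrow> lt_l C A B \<and> lt_u C A B"

text \<open>Scalarizing functional phi_{e,A} (extended-real valued; inf of empty set is +infinity).\<close>
definition phi :: "'a::real_vector set \<Rightarrow> 'a \<Rightarrow> 'a set \<Rightarrow> 'a \<Rightarrow> ereal" where
  "phi C e A y = Inf {ereal t | t. y \<in> ({t *\<^sub>R e} \<oplus>\<^sub>s A) \<oplus>\<^sub>s C}"

definition Gl :: "'a::real_vector set \<Rightarrow> 'a \<Rightarrow> 'a set \<Rightarrow> 'a set \<Rightarrow> ereal" where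
  "Gl C e A B = (SUP b\<in>B. phi C e A b)"

definition Gu :: "'a::real_vector set \<Rightarrow> 'a \<Rightarrow> 'a set \<Rightarrow> 'a set \<Rightarrow> ereal" where
  "Gu C e B A = - Gl C e (uminus ` B) (uminus ` A)"

definition w :: "'a::real_vector set \<Rightarrow> 'a \<Rightarrow> 'a set \<Rightarrow> 'a set \<Rightarrow> ereal \<times> ereal" where
  "w C e A B = (- Gl C e A B, Gu C e B A)"

definition lt2 :: "ereal \<times> ereal \<Rightarrow> ereal \<times> ereal \<Rightarrow> bool" where
  "lt2 a b \<longleftrightarrow> fst a < fst b \<and> snd a < snd b"

definition strictly_s_increasing ::
  "'a::{real_vector,topological_space} set \<Rightarrow> ('a set \<Rightarrow> bool) \<Rightarrow> ('a set \<Rightarrow> ereal \<times> ereal) \<Rightarrow> bool" where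
  "strictly_s_increasing C \<A> T \<longleftrightarrow> (\<forall>A B. \<A> A \<and> \<A> B \<and> lt_s C A B \<longrightarrow> lt2 (T A) (T B))"

definition strictly_s_decreasing ::
  "'a::{real_vector,topological_space} set \<Rightarrow> ('a set \<Rightarrow> bool) \<Rightarrow> ('a set \<Rightarrow> ereal \<times> ereal) \<Rightarrow> bool" where
  "strictly_s_decreasing C \<A> T \<longleftrightarrow> (\<forall>A B. \<A> A \<and> \<A> B \<and> lt_s C A B \<longrightarrow> lt2 (T B) (T A))"

end

theory Submission
  imports Defs
begin

text \<open>
  The sets \<open>t e + D + int C\<close> are open, absorb \<open>C\<close> and increase with \<open>t\<close>, so a \<open>C\<close>-compact
  set covered by the chain indexed by \<open>t = n\<close>, or by \<open>t = -1/n\<close>, already lies in one of them.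
  The first chain shows that \<open>G\<^sup>\<ell>\<^sub>e\<close> is finite; the second turns \<open>B \<subseteq> D + int C\<close>, for
  \<open>C\<close>-compact \<open>B\<close>, into \<open>B \<subseteq> -\<epsilon> e + D + int C\<close> for some \<open>\<epsilon> > 0\<close>. This uniform gap makes
  \<open>G\<^sup>\<ell>\<^sub>e(D,A) < G\<^sup>\<ell>\<^sub>e(B,A)\<close> and \<open>G\<^sup>\<ell>\<^sub>e(A,B) < G\<^sup>\<ell>\<^sub>e(A,D)\<close> strict. The second
  components of \<open>w\<^sub>e\<close> are the first ones for the negated sets, and negation maps the
  \<open>\<mp>C\<close>-compact members of \<open>P\<^sup>0\<close> onto themselves and turns \<open>\<prec>\<^sup>u\<close> into \<open>\<prec>\<^sup>\<ell>\<close>.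
\<close>

lemma mem_shifted_msum: "y \<in> ({v} \<oplus>\<^sub>s X) \<oplus>\<^sub>s K \<longleftrightarrow> (\<exists>x\<in>X. \<exists>k\<in>K. y = v + x + k)"
  unfolding msum_def by blast

lemma uminus_msum: "uminus ` (A \<oplus>\<^sub>s B) = uminus ` A \<ominus>\<^sub>s B"
  unfolding msum_def mdiff_def by force

lemma uminus_mdiff: "uminus ` (A \<ominus>\<^sub>s B) = uminus ` A \<oplus>\<^sub>s B"
  unfolding msum_def mdiff_def by force

lemma uminus_in_msum_iff: "x \<in> uminus ` A \<oplus>\<^sub>s uminus ` B \<longleftrightarrow> - x \<in> A \<oplus>\<^sub>s B"
proof -
  have "x \<in> uminus ` A \<oplus>\<^sub>s uminus ` B \<longleftrightarrow> (\<exists>a\<in>A. \<exists>b\<in>B. x = - a + - b)"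
    unfolding msum_def by blast
  also have "\<dots> \<longleftrightarrow> (\<exists>a\<in>A. \<exists>b\<in>B. - x = a + b)"
    by (intro bex_cong refl) (metis minus_add_distrib minus_minus add.commute)
  finally show ?thesis
    unfolding msum_def by blast
qed

lemma lt_u_iff_lt_l_uminus: "lt_u K A B \<longleftrightarrow> lt_l K (uminus ` B) (uminus ` A)"
  unfolding lt_u_def lt_l_def uminus_mdiff[symmetric] by (simp add: inj_image_subset_iff)

lemma uminus_image_eq_UNIV_iff: "uminus ` X = UNIV \<longleftrightarrow> X = (UNIV :: 'a::group_add set)"
  using inj_image_eq_iff[of uminus X UNIV] by simp

lemma P0_uminus: "P0 K A \<Longrightarrow> P0 K (uminus ` A)"
  unfolding P0_def uminus_msum[symmetric] uminus_mdiff[symmetric] uminus_image_eq_UNIV_iff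
  by simp

context
  assumes tls: "topological_linear_space TYPE('a::{real_vector,topological_space})"
begin

lemma continuous_on_tls_add:
  fixes f g :: "'b::topological_space \<Rightarrow> 'a"
  assumes "continuous_on UNIV f" and "continuous_on UNIV g"
  shows "continuous_on UNIV (\<lambda>x. f x + g x)"
  using continuous_on_compose2[of UNIV "\<lambda>p::'a \<times> 'a. fst p + snd p" UNIV "\<lambda>x. (f x, g x)"]
    tls assms by (simp add: topological_linear_space_def continuous_on_Pair)

lemma continuous_on_tls_scaleR:
  fixes f :: "'b::topological_space \<Rightarrow> real" and g :: "'b \<Rightarrow> 'a"
  assumes "continuous_on UNIV f" and "continuous_on UNIV g"
  shows "continuous_on UNIV (\<lambda>x. f x *\<^sub>R g x)"
  using continuous_on_compose2[of UNIV "\<lambda>p::real \<times> 'a. fst p *\<^sub>R snd p" UNIV "\<lambda>x. (f x, g x)"]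
    tls assms by (simp add: topological_linear_space_def continuous_on_Pair)

lemma continuous_on_affine_line: "continuous_on UNIV (\<lambda>s::real. v + s *\<^sub>R (u::'a))"
  by (intro continuous_on_tls_add continuous_on_tls_scaleR continuous_on_id continuous_on_const)

lemma open_affine_image:
  assumes "r \<noteq> 0" and "open S" shows "open ((\<lambda>x::'a. v + r *\<^sub>R x) ` S)"
proof -
  have "continuous_on UNIV (\<lambda>x::'a. inverse r *\<^sub>R (x + - v))"
    by (intro continuous_on_tls_scaleR continuous_on_tls_add continuous_on_id continuous_on_const)
  moreover have "(\<lambda>x. v + r *\<^sub>R x) ` S = (\<lambda>x. inverse r *\<^sub>R (x + - v)) -` S"
    using \<open>r \<noteq> 0\<close> by (force simp: image_iff)
  ultimately show ?thesis
    using \<open>open S\<close> by (simp add: continuous_on_open_vimage)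
qed

lemma open_uminus_image: "open S \<Longrightarrow> open (uminus ` (S::'a set))"
  using open_affine_image[of "-1" S 0] by simp

lemma open_translation_image: "open S \<Longrightarrow> open ((+) v ` (S::'a set))"
  using open_affine_image[of 1 S v] by simp

lemma open_scaleR_image: "r \<noteq> 0 \<Longrightarrow> open S \<Longrightarrow> open ((*\<^sub>R) r ` (S::'a set))"
  using open_affine_image[of r S 0] by simp

lemma K_compact_uminus:
  assumes "K_compact (uminus ` K) A" shows "K_compact K (uminus ` (A::'a set))"
  unfolding K_compact_def
proof (intro allI impI, elim conjE)
  fix \<U> :: "'a set set"
  assume "\<forall>U\<in>\<U>. open U" and cover: "uminus ` A \<subseteq> (\<Union>U\<in>\<U>. U \<oplus>\<^sub>s K)"
  then have "\<forall>V\<in>(`) uminus ` \<U>. open V"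
    using open_uminus_image by blast
  moreover have "A \<subseteq> (\<Union>V\<in>(`) uminus ` \<U>. V \<oplus>\<^sub>s uminus ` K)"
  proof
    fix x assume "x \<in> A"
    then obtain U where "U \<in> \<U>" "- x \<in> U \<oplus>\<^sub>s K"
      using cover by blast
    then show "x \<in> (\<Union>V\<in>(`) uminus ` \<U>. V \<oplus>\<^sub>s uminus ` K)"
      unfolding uminus_in_msum_iff[symmetric] by blast
  qed
  ultimately have "\<exists>\<G>\<subseteq>(`) uminus ` \<U>. finite \<G> \<and> A \<subseteq> (\<Union>V\<in>\<G>. V \<oplus>\<^sub>s uminus ` K)"
    by (rule assms[unfolded K_compact_def, rule_format, OF conjI])
  then obtain \<G> where "\<G> \<subseteq> (`) uminus ` \<U>" "finite \<G>" "A \<subseteq> (\<Union>V\<in>\<G>. V \<oplus>\<^sub>s uminus ` K)"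
    by blast
  moreover from this(1,2) obtain \<F> where "\<F> \<subseteq> \<U>" "finite \<F>" "\<G> = (`) uminus ` \<F>"
    by (meson finite_subset_image)
  ultimately have "A \<subseteq> (\<Union>U\<in>\<F>. uminus ` U \<oplus>\<^sub>s uminus ` K)"
    by simp
  have "uminus ` A \<subseteq> (\<Union>U\<in>\<F>. U \<oplus>\<^sub>s K)"
  proof
    fix x assume "x \<in> uminus ` A"
    then have "- x \<in> A"
      by auto
    then obtain U where "U \<in> \<F>" "- x \<in> uminus ` U \<oplus>\<^sub>s uminus ` K"
      using \<open>A \<subseteq> (\<Union>U\<in>\<F>. uminus ` U \<oplus>\<^sub>s uminus ` K)\<close> by blast
    then show "x \<in> (\<Union>U\<in>\<F>. U \<oplus>\<^sub>s K)"
      unfolding uminus_in_msum_iff minus_minus by blast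
  qed
  with \<open>\<F> \<subseteq> \<U>\<close> \<open>finite \<F>\<close> show "\<exists>\<F>\<subseteq>\<U>. finite \<F> \<and> uminus ` A \<subseteq> (\<Union>U\<in>\<F>. U \<oplus>\<^sub>s K)"
    by blast
qed

lemma pm_compact_uminus: "pm_compact K A \<Longrightarrow> pm_compact K (uminus ` (A::'a set))"
  unfolding pm_compact_def using K_compact_uminus[of "uminus ` K"] K_compact_uminus[of K]
  by (simp add: image_image)

end

lemma K_compact_subset_chain:
  fixes W :: "nat \<Rightarrow> 'a::{real_vector,topological_space} set"
  assumes "K_compact K Y" and "0 \<in> K" and "\<And>n. open (W n)" and "\<And>n. W n \<oplus>\<^sub>s K \<subseteq> W n"
    and "incseq W" and "Y \<subseteq> (\<Union>n. W n)"
  shows "\<exists>N. Y \<subseteq> W N"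
proof -
  have W_sub: "W n \<subseteq> W n \<oplus>\<^sub>s K" for n
  proof
    fix x assume "x \<in> W n"
    then show "x \<in> W n \<oplus>\<^sub>s K"
      unfolding msum_def using \<open>0 \<in> K\<close> by (metis (mono_tags, lifting) add_0_right mem_Collect_eq)
  qed
  have "Y \<subseteq> (\<Union>n. W n \<oplus>\<^sub>s K)"
    using assms(6) W_sub by (meson UN_mono order.trans order_refl)
  then have "Y \<subseteq> (\<Union>U\<in>range W. U \<oplus>\<^sub>s K)"
    by (simp add: image_image)
  then have "\<exists>F\<subseteq>range W. finite F \<and> Y \<subseteq> (\<Union>U\<in>F. U \<oplus>\<^sub>s K)"
    using assms(1)[unfolded K_compact_def, rule_format, of "range W"] assms(3) by blast
  then obtain F where "F \<subseteq> range W" "finite F" and cover: "Y \<subseteq> (\<Union>U\<in>F. U \<oplus>\<^sub>s K)"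
    by blast
  obtain I where "finite I" "F = W ` I"
    using finite_subset_image[OF \<open>finite F\<close> \<open>F \<subseteq> range W\<close>] by blast
  have "Y \<subseteq> W (Max (insert 0 I))"
  proof
    fix y assume "y \<in> Y"
    then obtain n where "n \<in> I" "y \<in> W n \<oplus>\<^sub>s K"
      using cover \<open>F = W ` I\<close> by blast
    then have "y \<in> W n"
      using assms(4) by blast
    moreover have "W n \<subseteq> W (Max (insert 0 I))"
      using \<open>incseq W\<close> \<open>finite I\<close> \<open>n \<in> I\<close> by (simp add: monoD)
    ultimately show "y \<in> W (Max (insert 0 I))"
      by blast
  qed
  then show ?thesis ..
qed

locale scalarization =
  fixes C :: "'a::{real_vector,topological_space} set" and e :: 'a
  assumes tls: "topological_linear_space TYPE('a)"
    and convex_cone_C: "convex_cone C"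
    and minus_e_interior: "- e \<in> interior C"
begin

lemma add_interior:
  assumes "c \<in> C" and "k \<in> interior C" shows "c + k \<in> interior C"
proof -
  have "(+) c ` interior C \<subseteq> C"
    using \<open>c \<in> C\<close> interior_subset convex_cone_add[OF convex_cone_C] by blast
  then have "(+) c ` interior C \<subseteq> interior C"
    by (rule interior_maximal) (simp add: open_translation_image[OF tls])
  then show ?thesis
    using \<open>k \<in> interior C\<close> by blast
qed

lemma scaleR_interior:
  assumes "0 < r" and "k \<in> interior C" shows "r *\<^sub>R k \<in> interior C"
proof -
  have "r *\<^sub>R x \<in> C" if "x \<in> interior C" for x
    using that \<open>0 < r\<close> interior_subset by (intro convex_cone_scaleR[OF convex_cone_C]) auto
  then have "(*\<^sub>R) r ` interior C \<subseteq> C"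
    by blast
  then have "(*\<^sub>R) r ` interior C \<subseteq> interior C"
    using \<open>0 < r\<close> by (intro interior_maximal open_scaleR_image[OF tls]) simp_all
  then show ?thesis
    using \<open>k \<in> interior C\<close> by blast
qed

lemma interior_perturbation:
  assumes "k \<in> interior C" shows "\<exists>d>0. \<forall>s. \<bar>s\<bar> < d \<longrightarrow> k + s *\<^sub>R u \<in> interior C"
proof -
  define S where "S = (\<lambda>s. k + s *\<^sub>R u) -` interior C"
  have "open S"
    unfolding S_def using continuous_on_affine_line[OF tls] by (simp add: continuous_on_open_vimage)
  moreover have "0 \<in> S"
    unfolding S_def using assms by simp
  ultimately obtain d where "d > 0" "\<And>s. dist s 0 < d \<Longrightarrow> s \<in> S"
    unfolding open_dist by blast
  then show ?thesis
    unfolding S_def by (intro exI[of _ d]) (simp add: dist_real_def)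
qed

lemma interior_absorbing: "\<exists>T. \<forall>r\<ge>T. u + r *\<^sub>R (- e) \<in> interior C"
proof -
  obtain d where "d > 0" and d: "\<And>s. \<bar>s\<bar> < d \<Longrightarrow> - e + s *\<^sub>R u \<in> interior C"
    using interior_perturbation[OF minus_e_interior] by blast
  have "u + r *\<^sub>R (- e) \<in> interior C" if "r \<ge> 2 / d" for r
  proof -
    have "0 < 2 / d"
      using \<open>d > 0\<close> by simp
    then have "r > 0"
      using that by linarith
    have "inverse r \<le> inverse (2 / d)"
      using that \<open>0 < 2 / d\<close> by (rule le_imp_inverse_le)
    then have "\<bar>inverse r\<bar> < d"
      using \<open>r > 0\<close> \<open>d > 0\<close> by simp
    then have "r *\<^sub>R (- e + inverse r *\<^sub>R u) \<in> interior C"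
      using d scaleR_interior \<open>r > 0\<close> by blast
    moreover have "r *\<^sub>R (- e + inverse r *\<^sub>R u) = u + r *\<^sub>R (- e)"
      using \<open>r > 0\<close> by (simp add: scaleR_add_right scaleR_right_diff_distrib add.commute)
    ultimately show ?thesis
      by simp
  qed
  then show ?thesis by blast
qed

lemma zero_in_C: "0 \<in> C"
  using convex_cone_contains_0[OF convex_cone_C] .

text \<open>\<open>t e + X + int C\<close>, squeezed between the strict and the non-strict sublevel sets of
  \<open>\<phi>\<^sub>e\<^sub>,\<^sub>X\<close> at \<open>t\<close>.\<close>
definition sublevel :: "real \<Rightarrow> 'a set \<Rightarrow> 'a set" where
  "sublevel t X = {t *\<^sub>R e + x + k | x k. x \<in> X \<and> k \<in> interior C}"

lemma open_sublevel: "open (sublevel t X)"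
proof -
  have "sublevel t X = (\<Union>x\<in>X. (+) (t *\<^sub>R e + x) ` interior C)"
    unfolding sublevel_def by auto
  then show ?thesis
    by (simp add: open_UN open_translation_image[OF tls])
qed

lemma mem_sublevel: "y \<in> sublevel t X \<longleftrightarrow> (\<exists>x\<in>X. \<exists>k\<in>interior C. y = t *\<^sub>R e + x + k)"
  unfolding sublevel_def by blast

lemma sublevel_msum_subset: "sublevel t X \<oplus>\<^sub>s C \<subseteq> sublevel t X"
proof
  fix y assume "y \<in> sublevel t X \<oplus>\<^sub>s C"
  then obtain z c where "z \<in> sublevel t X" "c \<in> C" "y = z + c"
    unfolding msum_def by blast
  then obtain x k where "x \<in> X" "k \<in> interior C" "y = t *\<^sub>R e + x + k + c"
    unfolding mem_sublevel by blast
  moreover have "t *\<^sub>R e + x + k + c = t *\<^sub>R e + x + (c + k)" for x k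
    by (simp add: ac_simps)
  ultimately show "y \<in> sublevel t X"
    unfolding mem_sublevel using add_interior \<open>c \<in> C\<close> by metis
qed

lemma sublevel_mono: "t \<le> t' \<Longrightarrow> X \<subseteq> X' \<Longrightarrow> sublevel t X \<subseteq> sublevel t' X'"
proof
  fix y assume "t \<le> t'" "X \<subseteq> X'" "y \<in> sublevel t X"
  then obtain x k where "x \<in> X'" "k \<in> interior C" "y = t *\<^sub>R e + x + k"
    unfolding mem_sublevel by blast
  moreover have "t *\<^sub>R e + x + k = t' *\<^sub>R e + x + ((t' - t) *\<^sub>R (- e) + k)" for x k
    by (simp add: algebra_simps)
  moreover have "(t' - t) *\<^sub>R (- e) \<in> C"
    using \<open>t \<le> t'\<close> minus_e_interior interior_subset by (intro convex_cone_scaleR[OF convex_cone_C]) auto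
  ultimately show "y \<in> sublevel t' X'"
    unfolding mem_sublevel using add_interior by metis
qed

lemma sublevel_sublevel: "sublevel s (sublevel t X) \<subseteq> sublevel (s + t) X"
proof
  fix y assume "y \<in> sublevel s (sublevel t X)"
  then obtain z k' where "z \<in> sublevel t X" "k' \<in> interior C" "y = s *\<^sub>R e + z + k'"
    using mem_sublevel[of y s "sublevel t X"] by blast
  moreover from \<open>z \<in> sublevel t X\<close> obtain x k where "x \<in> X" "k \<in> interior C" "z = t *\<^sub>R e + x + k"
    unfolding mem_sublevel by blast
  ultimately have "y = (s + t) *\<^sub>R e + x + (k + k')"
    by (simp add: algebra_simps)
  moreover have "k + k' \<in> interior C"
    using \<open>k \<in> interior C\<close> \<open>k' \<in> interior C\<close> add_interior interior_subset by blast
  ultimately show "y \<in> sublevel (s + t) X"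
    unfolding mem_sublevel using \<open>x \<in> X\<close> by blast
qed

lemma Gl_le_if_subset_sublevel:
  assumes "Y \<subseteq> sublevel t X" shows "Gl C e X Y \<le> ereal t"
  unfolding Gl_def
proof (rule SUP_least)
  fix y assume "y \<in> Y"
  with assms have "y \<in> sublevel t X"
    by blast
  then obtain x k where "x \<in> X" "k \<in> interior C" "y = t *\<^sub>R e + x + k"
    unfolding mem_sublevel by blast
  then have "y \<in> ({t *\<^sub>R e} \<oplus>\<^sub>s X) \<oplus>\<^sub>s C"
    unfolding mem_shifted_msum using interior_subset by blast
  then show "phi C e X y \<le> ereal t"
    unfolding phi_def by (blast intro: Inf_lower)
qed

lemma subset_sublevel_if_Gl_less:
  assumes "Gl C e X Y < ereal t" shows "Y \<subseteq> sublevel t X"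
proof
  fix y assume "y \<in> Y"
  then have "phi C e X y < ereal t"
    using assms unfolding Gl_def by (meson SUP_upper le_less_trans)
  then obtain t' where "t' < t" "y \<in> ({t' *\<^sub>R e} \<oplus>\<^sub>s X) \<oplus>\<^sub>s C"
    unfolding phi_def Inf_less_iff by auto
  then obtain x c where "x \<in> X" "c \<in> C" "y = t' *\<^sub>R e + x + c"
    unfolding mem_shifted_msum by blast
  then have "y = t *\<^sub>R e + x + (c + (t - t') *\<^sub>R (- e))"
    by (simp add: algebra_simps)
  moreover have "(t - t') *\<^sub>R (- e) \<in> interior C"
    using \<open>t' < t\<close> by (intro scaleR_interior minus_e_interior) simp
  ultimately show "y \<in> sublevel t X"
    unfolding mem_sublevel using add_interior \<open>x \<in> X\<close> \<open>c \<in> C\<close> by blast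
qed

lemma phi_bounded_below:
  assumes "X \<oplus>\<^sub>s C \<noteq> UNIV" shows "\<exists>T. ereal T \<le> phi C e X y"
proof -
  obtain z where z: "z \<notin> X \<oplus>\<^sub>s C"
    using assms by blast
  obtain T where T: "\<And>r. r \<ge> T \<Longrightarrow> (z - y) + r *\<^sub>R (- e) \<in> interior C"
    using interior_absorbing by blast
  have "- T < t" if "x \<in> X" "c \<in> C" "y = t *\<^sub>R e + x + c" for t x c
  proof (rule ccontr)
    assume "\<not> - T < t"
    then have "(z - y) + (- t) *\<^sub>R (- e) \<in> interior C"
      by (intro T) simp
    then have "c + ((z - y) + (- t) *\<^sub>R (- e)) \<in> C"
      using \<open>c \<in> C\<close> add_interior interior_subset by blast
    moreover have "z = x + (c + ((z - y) + (- t) *\<^sub>R (- e)))"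
      using that by (simp add: algebra_simps)
    ultimately show False
      using z \<open>x \<in> X\<close> unfolding msum_def by blast
  qed
  then have "ereal (- T) \<le> phi C e X y"
    unfolding phi_def by (force intro: Inf_greatest simp: mem_shifted_msum)
  then show ?thesis ..
qed

lemma Gl_bounded_above:
  assumes "X \<noteq> {}" and "K_compact C Y" shows "\<exists>T. Gl C e X Y \<le> ereal T"
proof -
  obtain x where "x \<in> X"
    using assms(1) by blast
  have "Y \<subseteq> (\<Union>n. sublevel (real n) X)"
  proof
    fix y
    obtain T where T: "\<And>r. r \<ge> T \<Longrightarrow> (y - x) + r *\<^sub>R (- e) \<in> interior C"
      using interior_absorbing by blast
    have "(y - x) + real (nat \<lceil>T\<rceil>) *\<^sub>R (- e) \<in> interior C"
      by (rule T) linarith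
    moreover have "y = real (nat \<lceil>T\<rceil>) *\<^sub>R e + x + ((y - x) + real (nat \<lceil>T\<rceil>) *\<^sub>R (- e))"
      by simp
    ultimately show "y \<in> (\<Union>n. sublevel (real n) X)"
      unfolding sublevel_def using \<open>x \<in> X\<close> by blast
  qed
  moreover have "incseq (\<lambda>n. sublevel (real n) X)"
    by (simp add: incseq_def sublevel_mono)
  ultimately obtain N where "Y \<subseteq> sublevel (real N) X"
    using K_compact_subset_chain[of C Y "\<lambda>n. sublevel (real n) X",
        OF assms(2) zero_in_C open_sublevel sublevel_msum_subset] by blast
  then show ?thesis
    using Gl_le_if_subset_sublevel by blast
qed

lemma Gl_finite:
  assumes "X \<noteq> {}" and "X \<oplus>\<^sub>s C \<noteq> UNIV" and "Y \<noteq> {}" and "K_compact C Y"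
  shows "\<exists>s. Gl C e X Y = ereal s"
proof -
  obtain y where "y \<in> Y"
    using assms(3) by blast
  obtain T where "ereal T \<le> phi C e X y"
    using phi_bounded_below[OF assms(2)] by blast
  also have "\<dots> \<le> Gl C e X Y"
    unfolding Gl_def using \<open>y \<in> Y\<close> by (rule SUP_upper)
  finally show ?thesis
    using Gl_bounded_above[OF assms(1,4)] by (cases "Gl C e X Y") auto
qed

lemma K_compact_sublevel_gap:
  assumes "Y \<subseteq> X \<oplus>\<^sub>s interior C" and "K_compact C Y"
  shows "\<exists>\<epsilon>>0. Y \<subseteq> sublevel (- \<epsilon>) X"
proof -
  define W where "W n = sublevel (- inverse (real (Suc n))) X" for n
  have cover: "Y \<subseteq> (\<Union>n. W n)"
  proof
    fix y assume "y \<in> Y"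
    then obtain x k where "x \<in> X" "k \<in> interior C" "y = x + k"
      using assms(1) unfolding msum_def by blast
    obtain d where "d > 0" and d: "\<And>s. \<bar>s\<bar> < d \<Longrightarrow> k + s *\<^sub>R e \<in> interior C"
      using interior_perturbation[OF \<open>k \<in> interior C\<close>] by blast
    obtain n where n: "inverse (real (Suc n)) < d"
      using reals_Archimedean[OF \<open>d > 0\<close>] by blast
    have "y = (- inverse (real (Suc n))) *\<^sub>R e + x + (k + inverse (real (Suc n)) *\<^sub>R e)"
      using \<open>y = x + k\<close> by simp
    moreover have "k + inverse (real (Suc n)) *\<^sub>R e \<in> interior C"
      using d n by simp
    ultimately have "y \<in> W n"
      unfolding W_def mem_sublevel using \<open>x \<in> X\<close> by blast
    then show "y \<in> (\<Union>n. W n)"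
      by blast
  qed
  have "incseq W"
  proof (rule incseq_SucI)
    fix n
    have "inverse (real (Suc (Suc n))) \<le> inverse (real (Suc n))"
      by (intro le_imp_inverse_le) auto
    then show "W n \<subseteq> W (Suc n)"
      unfolding W_def by (intro sublevel_mono) auto
  qed
  moreover have "open (W n)" "W n \<oplus>\<^sub>s C \<subseteq> W n" for n
    unfolding W_def by (rule open_sublevel sublevel_msum_subset)+
  ultimately obtain N where "Y \<subseteq> W N"
    using K_compact_subset_chain[OF assms(2) zero_in_C _ _ _ cover] by blast
  then show ?thesis
    unfolding W_def by (intro exI[of _ "inverse (real (Suc N))"]) simp
qed

lemma Gl_strict_mono_right:
  assumes "Y \<subseteq> X \<oplus>\<^sub>s interior C" and "K_compact C Y" and "Gl C e A X = ereal s"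
  shows "Gl C e A Y < Gl C e A X"
proof -
  obtain \<epsilon> where "\<epsilon> > 0" and "Y \<subseteq> sublevel (- \<epsilon>) X"
    using K_compact_sublevel_gap[OF assms(1,2)] by blast
  moreover have "X \<subseteq> sublevel (s + \<epsilon> / 2) A"
    using assms(3) \<open>\<epsilon> > 0\<close> by (intro subset_sublevel_if_Gl_less) simp
  ultimately have "Y \<subseteq> sublevel (- \<epsilon> + (s + \<epsilon> / 2)) A"
    using sublevel_mono[OF order_refl] sublevel_sublevel by (meson subset_trans)
  then have "Gl C e A Y \<le> ereal (s - \<epsilon> / 2)"
    using Gl_le_if_subset_sublevel by (simp add: algebra_simps)
  also have "\<dots> < Gl C e A X"
    using assms(3) \<open>\<epsilon> > 0\<close> by simp
  finally show ?thesis .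
qed

lemma Gl_strict_antimono_left:
  assumes "Y \<subseteq> X \<oplus>\<^sub>s interior C" and "K_compact C Y" and "Gl C e Y A = ereal s"
  shows "Gl C e X A < Gl C e Y A"
proof -
  obtain \<epsilon> where "\<epsilon> > 0" and "Y \<subseteq> sublevel (- \<epsilon>) X"
    using K_compact_sublevel_gap[OF assms(1,2)] by blast
  moreover have "A \<subseteq> sublevel (s + \<epsilon> / 2) Y"
    using assms(3) \<open>\<epsilon> > 0\<close> by (intro subset_sublevel_if_Gl_less) simp
  ultimately have "A \<subseteq> sublevel (s + \<epsilon> / 2 + - \<epsilon>) X"
    using sublevel_mono[OF order_refl] sublevel_sublevel by (meson subset_trans)
  then have "Gl C e X A \<le> ereal (s - \<epsilon> / 2)"
    using Gl_le_if_subset_sublevel by (simp add: algebra_simps)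
  also have "\<dots> < Gl C e Y A"
    using assms(3) \<open>\<epsilon> > 0\<close> by simp
  finally show ?thesis .
qed

lemma Gl_strict_lt_l:
  assumes "lt_l C D B"
    and "P0 C A" "K_compact C A" and "P0 C B" "K_compact C B" and "P0 C D" "K_compact C D"
  shows "Gl C e D A < Gl C e B A" and "Gl C e A B < Gl C e A D"
proof -
  have "B \<subseteq> D \<oplus>\<^sub>s interior C"
    using assms(1) unfolding lt_l_def .
  moreover obtain s where "Gl C e B A = ereal s"
    using Gl_finite assms(2-5) unfolding P0_def by blast
  moreover obtain s' where "Gl C e A D = ereal s'"
    using Gl_finite assms(2,6,7) unfolding P0_def by blast
  ultimately show "Gl C e D A < Gl C e B A" and "Gl C e A B < Gl C e A D"
    using Gl_strict_antimono_left Gl_strict_mono_right assms(5) by blast+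
qed

end

theorem theorem2:
  fixes C :: "'a::{real_vector,topological_space} set" and e :: 'a and A :: "'a set"
  assumes "topological_linear_space TYPE('a)"
    and "convex C" and "closed C" and "is_cone C" and "pointed C" and "interior C \<noteq> {}"
    and "e \<in> uminus ` interior C"
    and "P0 C A" and "pm_compact C A"
  shows "strictly_s_decreasing C (\<lambda>D. P0 C D \<and> pm_compact C D) (\<lambda>D. w C e D A)
       \<and> strictly_s_increasing C (\<lambda>D. P0 C D \<and> pm_compact C D) (\<lambda>D. w C e A D)"
proof -
  have "convex_cone C"
    using assms(2,4,6) interior_subset unfolding convex_cone_def conic_def is_cone_def by blast
  moreover have "- e \<in> interior C"
    using assms(7) by auto
  ultimately interpret scalarization C e
    using assms(1) by unfold_locales
  have family_uminus: "P0 C (uminus ` D) \<and> pm_compact C (uminus ` D)"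
    if "P0 C D \<and> pm_compact C D" for D
    using that P0_uminus pm_compact_uminus[OF assms(1)] by blast
  have "lt2 (w C e B A) (w C e D A) \<and> lt2 (w C e A D) (w C e A B)"
    if "P0 C D \<and> pm_compact C D" "P0 C B \<and> pm_compact C B" "lt_s C D B" for D B
  proof -
    have "lt_l C D B" and "lt_l C (uminus ` B) (uminus ` D)"
      using that(3) unfolding lt_s_def lt_u_iff_lt_l_uminus by blast+
    note strict = Gl_strict_lt_l[OF \<open>lt_l C D B\<close>]
      Gl_strict_lt_l[OF \<open>lt_l C (uminus ` B) (uminus ` D)\<close>]
    have "Gl C e D A < Gl C e B A" "Gl C e A B < Gl C e A D"
      "Gl C e (uminus ` B) (uminus ` A) < Gl C e (uminus ` D) (uminus ` A)"
      "Gl C e (uminus ` A) (uminus ` D) < Gl C e (uminus ` A) (uminus ` B)"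
      using strict that(1,2) family_uminus[of A] family_uminus[of B] family_uminus[of D] assms(8,9)
      unfolding pm_compact_def by simp_all
    then show ?thesis
      unfolding lt2_def w_def Gu_def by simp
  qed
  then show ?thesis
    unfolding strictly_s_decreasing_def strictly_s_increasing_def by blast
qed

end
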